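(* Let $\mathcal{X}=\{1,\dots,n\}$, let $\pi$ be a strictly positive probability distribution on $\mathcal{X}$ ordered so that $\pi(1)\le\pi(2)\le\dots\le\pi(n)$, let $P$ be a transition matrix with $\pi P=\pi$, let $2\le k\le n$, and let $\alpha\in[0,1)$. For a partition $(\mathcal{O}_i)_{i=1}^k$ of $\mathcal{X}$ into $k$ nonempty proper subsets, let $G$ be its Gibbs kernel, $\overline{\pi}=(\pi(\mathcal{O}_1),\dots,\pi(\mathcal{O}_k))$, and $Q_\alpha$, $\widetilde{\pi}_\alpha$, $\widetilde{\Pi}_\alpha$ as defined below. Then, as functions of the partition, $$\operatorname*{argmin}\mathrm{KL}_{\widetilde{\pi}_\alpha}(Q_\alpha\|\widetilde{\Pi}_\alpha)=\operatorname*{argmin}\mathrm{KL}_\pi(G\|\Pi)=\operatorname*{argmin}H(\overline{\pi}),$$ and the minimum is attained by the partition $\mathcal{O}_i=\{i\}$ for $1\le i\le k-1$ and $\mathcal{O}_k=\{k,k+1,\dots,n\}$.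
   Context: Gibbs kernel: $G(x,y)=\pi(y)/\pi(\mathcal{O}(x))$ if $y\in\mathcal{O}(x)$ and $0$ otherwise, $\mathcal{O}(x)$ the block containing $x$, $\pi(\mathcal{O})=\sum_{z\in\mathcal{O}}\pi(z)$. $\Pi$ is the matrix with every row equal to $\pi$. With $R(+1)=1-\alpha$, $R(-1)=\alpha$: $Q_\alpha$ is the transition matrix on $\mathcal{X}\times\{-1,+1\}$ with $Q_\alpha((x,i),(y,+1))=(1-\alpha)G(x,y)$, $Q_\alpha((x,i),(y,-1))=\alpha P(x,y)$; $\widetilde{\pi}_\alpha(x,i)=\pi(x)R(i)$; $\widetilde{\Pi}_\alpha$ has every row equal to $\widetilde{\pi}_\alpha$. $\mathrm{KL}_\mu(P\|Q)=\sum_{x,y}\mu(x)P(x,y)\log\frac{P(x,y)}{Q(x,y)}$ with $0\log(0/a)=0$; $H(\mu)=-\sum_i\mu(i)\log\mu(i)$. *)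

theory Defs
  imports Complex_Main
begin

definition is_partition_k :: "nat \<Rightarrow> nat \<Rightarrow> nat set set \<Rightarrow> bool" where
  "is_partition_k n k B \<longleftrightarrow>
     (\<forall>C\<in>B. C \<noteq> {} \<and> C \<subset> {1..n}) \<and>
     (\<forall>C1\<in>B. \<forall>C2\<in>B. C1 \<noteq> C2 \<longrightarrow> C1 \<inter> C2 = {}) \<and>
     \<Union>B = {1..n} \<and> finite B \<and> card B = k"

definition block_of :: "nat set set \<Rightarrow> nat \<Rightarrow> nat set" where
  "block_of B x = (THE C. C \<in> B \<and> x \<in> C)"

definition pmass :: "(nat \<Rightarrow> real) \<Rightarrow> nat set \<Rightarrow> real" where
  "pmass \<pi> C = (\<Sum>z\<in>C. \<pi> z)"

definition gibbs :: "(nat \<Rightarrow> real) \<Rightarrow> nat set set \<Rightarrow> nat \<Rightarrow> nat \<Rightarrow> real" where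
  "gibbs \<pi> B x y = (if y \<in> block_of B x then \<pi> y / pmass \<pi> (block_of B x) else 0)"

definition rowmat :: "('s \<Rightarrow> real) \<Rightarrow> 's \<Rightarrow> 's \<Rightarrow> real" where
  "rowmat \<mu> x y = \<mu> y"

definition KL :: "'s set \<Rightarrow> ('s \<Rightarrow> real) \<Rightarrow> ('s \<Rightarrow> 's \<Rightarrow> real) \<Rightarrow> ('s \<Rightarrow> 's \<Rightarrow> real) \<Rightarrow> real" where
  "KL S \<mu> P Q = (\<Sum>x\<in>S. \<Sum>y\<in>S.
      (if P x y = 0 then 0 else \<mu> x * P x y * ln (P x y / Q x y)))"

definition entropy :: "'i set \<Rightarrow> ('i \<Rightarrow> real) \<Rightarrow> real" where
  "entropy I \<mu> = - (\<Sum>i\<in>I. (if \<mu> i = 0 then 0 else \<mu> i * ln (\<mu> i)))"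

definition lifted_space :: "nat \<Rightarrow> (nat \<times> int) set" where
  "lifted_space n = {1..n} \<times> {-1, 1}"

definition Rw :: "real \<Rightarrow> int \<Rightarrow> real" where
  "Rw \<alpha> i = (if i = 1 then 1 - \<alpha> else \<alpha>)"

definition Qalpha :: "real \<Rightarrow> (nat \<Rightarrow> real) \<Rightarrow> (nat \<Rightarrow> nat \<Rightarrow> real) \<Rightarrow> nat set set
     \<Rightarrow> nat \<times> int \<Rightarrow> nat \<times> int \<Rightarrow> real" where
  "Qalpha \<alpha> \<pi> P B xi yj =
     (if snd yj = 1 then (1 - \<alpha>) * gibbs \<pi> B (fst xi) (fst yj)
      else \<alpha> * P (fst xi) (fst yj))"

definition pitilde :: "real \<Rightarrow> (nat \<Rightarrow> real) \<Rightarrow> nat \<times> int \<Rightarrow> real" where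
  "pitilde \<alpha> \<pi> xi = \<pi> (fst xi) * Rw \<alpha> (snd xi)"

definition argmin_part :: "nat \<Rightarrow> nat \<Rightarrow> (nat set set \<Rightarrow> real) \<Rightarrow> nat set set set" where
  "argmin_part n k f = {B. is_partition_k n k B \<and>
       (\<forall>B'. is_partition_k n k B' \<longrightarrow> f B \<le> f B')}"

end

theory Submission
  imports Defs
begin

(* Write eta t = -t ln t. On the block O(x) the ratio G(x,y)/pi(y) is 1/pi(O(x)), so
   KL_pi(G || Pi) = H(pibar). The lifted divergence is the mixture
   (1 - alpha) KL_pi(G || Pi) + alpha KL_pi(P || Pi), whose second term does not depend on the
   partition, so all three objectives have the same minimisers.
   To minimise the entropy, keep a block L of largest mass and rank the other k - 1 blocks by
   their least elements: the j-th of them has mass at least pi(j). Lowering its mass to pi(j)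
   and giving the difference to L yields the masses of the singleton-tail partition. By the
   tangent-line bound for the concave eta this cannot increase the entropy, because mass only
   moves to a block of larger mass, where the derivative -ln t - 1 is smaller. *)

lemma rank_bij_betw:
  fixes A :: "nat set"
  assumes "finite A" "0 \<notin> A"
  shows "bij_betw (\<lambda>a. card {b\<in>A. b \<le> a}) A {1..card A}"
proof -
  let ?r = "\<lambda>a. card {b\<in>A. b \<le> a}"
  have "strict_mono_on A ?r"
  proof (rule strict_mono_onI)
    fix a b assume "a \<in> A" "b \<in> A" "a < b"
    then have "{c\<in>A. c \<le> a} \<subset> {c\<in>A. c \<le> b}"
      by (auto simp: psubset_eq set_eq_iff intro!: exI[of _ b])
    then show "?r a < ?r b"
      using assms(1) by (intro psubset_card_mono) auto
  qed
  then have "inj_on ?r A"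
    by (rule strict_mono_on_imp_inj_on)
  moreover have "?r ` A \<subseteq> {1..card A}"
    using assms(1) by (auto intro!: card_mono simp: Suc_le_eq card_gt_0_iff)
  ultimately show ?thesis
    using assms(1) by (simp add: bij_betw_def card_image card_subset_eq)
qed

lemma rank_le:
  fixes A :: "nat set"
  assumes "0 \<notin> A"
  shows "card {b\<in>A. b \<le> a} \<le> a"
proof -
  have "{b\<in>A. b \<le> a} \<subseteq> {1..a}"
    using assms by (auto simp: Suc_le_eq intro!: gr0I)
  then show ?thesis
    by (metis card_atLeastAtMost card_mono diff_Suc_1 finite_atLeastAtMost)
qed

lemma is_partition_kD:
  assumes "is_partition_k n k B"
  shows "finite B" "card B = k" "\<Union>B = {1..n}"
    and "\<And>C. C \<in> B \<Longrightarrow> C \<noteq> {} \<and> C \<subseteq> {1..n} \<and> finite C"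
    and "\<And>C D. C \<in> B \<Longrightarrow> D \<in> B \<Longrightarrow> C \<noteq> D \<Longrightarrow> C \<inter> D = {}"
  using assms unfolding is_partition_k_def by (auto intro: finite_subset)

lemma block_of_eq:
  assumes "is_partition_k n k B" "C \<in> B" "x \<in> C"
  shows "block_of B x = C"
  unfolding block_of_def
  using is_partition_kD(5)[OF assms(1)] assms(2,3) by (intro the_equality) auto

lemma block_of_in:
  assumes "is_partition_k n k B" "x \<in> {1..n}"
  shows "block_of B x \<in> B" "x \<in> block_of B x"
proof -
  obtain C where "C \<in> B" "x \<in> C"
    using is_partition_kD(3)[OF assms(1)] assms(2) by blast
  then show "block_of B x \<in> B" "x \<in> block_of B x"
    using block_of_eq[OF assms(1)] by auto
qed

lemma sum_over_blocks:
  assumes "is_partition_k n k B"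
  shows "(\<Sum>x\<in>{1..n}. f x) = (\<Sum>C\<in>B. \<Sum>x\<in>C. f x)"
  using is_partition_kD[OF assms] sum.Union_disjoint[of B f] by (auto simp: pairwise_def)

lemma pmass_pos:
  assumes "is_partition_k n k B" "C \<in> B" "\<forall>x\<in>{1..n}. \<pi> x > 0"
  shows "pmass \<pi> C > 0"
  unfolding pmass_def using is_partition_kD(4)[OF assms(1,2)] assms(3)
  by (intro sum_pos) auto

lemma partition_ranked_blocks:
  assumes B: "is_partition_k n k B" and "L \<in> B"
    and sorted: "\<forall>x\<in>{1..n}. \<forall>y\<in>{1..n}. x \<le> y \<longrightarrow> \<pi> x \<le> \<pi> y"
    and nonneg: "\<forall>x\<in>{1..n}. 0 \<le> \<pi> x"
  obtains \<tau> where "bij_betw \<tau> (B - {L}) {1..k-1}"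
    and "\<And>C. C \<in> B - {L} \<Longrightarrow> \<pi> (\<tau> C) \<le> pmass \<pi> C"
proof -
  define A where "A = Min ` (B - {L})"
  \<comment> \<open>Rank the blocks by their least elements; the \<open>j\<close>-th smallest least element is at least \<open>j\<close>.\<close>
  define \<tau> where "\<tau> C = card {a\<in>A. a \<le> Min C}" for C
  have block: "C \<subseteq> {1..n}" "finite C" "Min C \<in> C" if "C \<in> B - {L}" for C
    using is_partition_kD(4)[OF B, of C] that by auto
  have "inj_on Min (B - {L})"
  proof (rule inj_onI)
    fix C D assume C: "C \<in> B - {L}" and D: "D \<in> B - {L}" and "Min C = Min D"
    then have "Min C \<in> C \<inter> D"
      using block(3)[OF C] block(3)[OF D] by simp
    then show "C = D"
      using is_partition_kD(5)[OF B, of C D] C D by auto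
  qed
  then have "bij_betw Min (B - {L}) A"
    unfolding A_def by (rule inj_on_imp_bij_betw)
  moreover have A: "A \<subseteq> {1..n}" "finite A"
    unfolding A_def using block(1,3) is_partition_kD(1)[OF B] by blast+
  moreover have "card A = k - 1"
    unfolding A_def using \<open>inj_on Min (B - {L})\<close> \<open>L \<in> B\<close> is_partition_kD(1,2)[OF B]
    by (simp add: card_image)
  moreover have "bij_betw (\<lambda>a. card {b\<in>A. b \<le> a}) A {1..card A}"
    using A by (intro rank_bij_betw) auto
  ultimately have bij: "bij_betw \<tau> (B - {L}) {1..k-1}"
    unfolding \<tau>_def using bij_betw_trans by (fastforce simp: comp_def)
  have "\<pi> (\<tau> C) \<le> pmass \<pi> C" if C: "C \<in> B - {L}" for C
  proof -
    have "\<tau> C \<in> {1..k-1}"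
      using bij C by (auto simp: bij_betw_def)
    moreover have "\<tau> C \<le> Min C"
      unfolding \<tau>_def using A by (intro rank_le) auto
    ultimately have "\<pi> (\<tau> C) \<le> \<pi> (Min C)"
      using sorted block[OF C] by (metis atLeastAtMost_iff subsetD le_trans)
    also have "\<pi> (Min C) \<le> pmass \<pi> C"
      unfolding pmass_def using block[OF C] nonneg by (intro member_le_sum) auto
    finally show ?thesis .
  qed
  with bij show ?thesis
    using that by blast
qed

lemma argmin_part_affine:
  assumes "\<And>B. is_partition_k n k B \<Longrightarrow> g B = a * f B + c" "0 < a"
  shows "argmin_part n k g = argmin_part n k f"
  unfolding argmin_part_def using assms by auto

definition eta :: "real \<Rightarrow> real" where
  "eta t = - (t * ln t)"

lemma entropy_eq_sum_eta: "entropy I \<mu> = (\<Sum>i\<in>I. eta (\<mu> i))"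
  unfolding entropy_def eta_def by (auto simp: sum_negf intro!: sum.cong)

lemma eta_le_tangent:
  fixes a b :: real
  assumes "0 < a" "0 < b"
  shows "eta b \<le> eta a + (- ln a - 1) * (b - a)"
proof -
  have "b * (ln a - ln b) = b * ln (a / b)"
    using assms by (simp add: ln_div)
  also have "\<dots> \<le> b * (a / b - 1)"
    using assms by (intro mult_left_mono ln_le_minus_one) auto
  also have "\<dots> = a - b"
    using assms by (simp add: field_simps)
  finally show ?thesis
    by (simp add: eta_def algebra_simps)
qed

lemma eta_sum_le_transfer_to_max:
  fixes a m :: "'i \<Rightarrow> real"
  assumes "finite I"
    and bounds: "\<And>i. i \<in> I \<Longrightarrow> 0 < a i \<and> a i \<le> m i \<and> m i \<le> m\<^sub>0"
    and "0 < m\<^sub>0"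
  shows "(\<Sum>i\<in>I. eta (a i)) + eta (m\<^sub>0 + (\<Sum>i\<in>I. m i - a i))
           \<le> (\<Sum>i\<in>I. eta (m i)) + eta m\<^sub>0"
proof -
  define eta' where "eta' t = - ln t - 1" for t :: real
  have m_pos: "0 < m i" if "i \<in> I" for i
    using bounds[OF that] by linarith
  have "0 \<le> (\<Sum>i\<in>I. m i - a i)"
    using bounds by (intro sum_nonneg) auto
  then have "eta (m\<^sub>0 + (\<Sum>i\<in>I. m i - a i)) \<le> eta m\<^sub>0 + eta' m\<^sub>0 * (\<Sum>i\<in>I. m i - a i)"
    using eta_le_tangent[of m\<^sub>0 "m\<^sub>0 + (\<Sum>i\<in>I. m i - a i)"] \<open>0 < m\<^sub>0\<close>
    unfolding eta'_def by simp
  moreover have "(\<Sum>i\<in>I. eta (a i)) \<le> (\<Sum>i\<in>I. eta (m i) + eta' (m i) * (a i - m i))"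
    using eta_le_tangent m_pos bounds unfolding eta'_def by (intro sum_mono) fastforce
  moreover have "(\<Sum>i\<in>I. (eta' (m i) - eta' m\<^sub>0) * (a i - m i)) \<le> 0"
  proof (intro sum_nonpos mult_nonneg_nonpos)
    fix i assume "i \<in> I"
    then show "0 \<le> eta' (m i) - eta' m\<^sub>0" "a i - m i \<le> 0"
      using bounds[of i] m_pos[of i] by (auto simp: eta'_def)
  qed
  ultimately show ?thesis
    by (simp add: sum.distrib sum_distrib_left algebra_simps sum_subtractf)
qed

lemma KL_eq: "KL S \<mu> P Q = (\<Sum>x\<in>S. \<Sum>y\<in>S. \<mu> x * P x y * ln (P x y / Q x y))"
  unfolding KL_def by (intro sum.cong) auto

lemma KL_gibbs_row:
  assumes B: "is_partition_k n k B" and pos: "\<forall>x\<in>{1..n}. \<pi> x > 0" and x: "x \<in> {1..n}"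
  shows "(\<Sum>y\<in>{1..n}. \<pi> x * gibbs \<pi> B x y * ln (gibbs \<pi> B x y / rowmat \<pi> x y))
           = - (\<pi> x * ln (pmass \<pi> (block_of B x)))"
proof -
  define C where "C = block_of B x"
  have C: "C \<in> B" "C \<subseteq> {1..n}"
    using block_of_in[OF B x] is_partition_kD(4)[OF B] unfolding C_def by auto
  define c where "c = - (\<pi> x * ln (pmass \<pi> C) / pmass \<pi> C)"
  have "(\<Sum>y\<in>{1..n}. \<pi> x * gibbs \<pi> B x y * ln (gibbs \<pi> B x y / rowmat \<pi> x y))
      = (\<Sum>y\<in>{1..n}. if y \<in> C then c * \<pi> y else 0)"
    using pos by (intro sum.cong) (auto simp: gibbs_def rowmat_def C_def c_def ln_div)
  also have "\<dots> = c * pmass \<pi> C"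
    by (simp only: sum.inter_restrict[OF finite_atLeastAtMost, symmetric] Int_absorb1[OF C(2)])
      (simp add: pmass_def sum_distrib_left)
  also have "\<dots> = - (\<pi> x * ln (pmass \<pi> C))"
    using pmass_pos[OF B C(1) pos] by (simp add: c_def)
  finally show ?thesis
    unfolding C_def .
qed

lemma KL_gibbs_eq_entropy:
  assumes B: "is_partition_k n k B" and pos: "\<forall>x\<in>{1..n}. \<pi> x > 0"
  shows "KL {1..n} \<pi> (gibbs \<pi> B) (rowmat \<pi>) = entropy B (pmass \<pi>)"
proof -
  have "KL {1..n} \<pi> (gibbs \<pi> B) (rowmat \<pi>)
      = (\<Sum>x\<in>{1..n}. - (\<pi> x * ln (pmass \<pi> (block_of B x))))"
    unfolding KL_eq using KL_gibbs_row[OF B pos] by (intro sum.cong) auto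
  also have "\<dots> = (\<Sum>C\<in>B. \<Sum>x\<in>C. - (\<pi> x * ln (pmass \<pi> C)))"
    unfolding sum_over_blocks[OF B] by (intro sum.cong refl) (simp add: block_of_eq[OF B])
  also have "\<dots> = (\<Sum>C\<in>B. eta (pmass \<pi> C))"
    by (simp add: eta_def pmass_def sum_distrib_right sum_negf)
  finally show ?thesis
    by (simp add: entropy_eq_sum_eta)
qed

lemma KL_summand_scale:
  fixes c m p q r :: real
  shows "(m * r) * (c * p) * ln (c * p / (q * c)) = r * c * (m * p * ln (p / q))"
  by (cases "c = 0") (simp_all add: ac_simps)

lemma sum_pm_one: "(\<Sum>j\<in>{-1, 1::int}. f j) = f (-1) + f 1"
  by simp

lemma sum_Rw_mult: "(\<Sum>i\<in>{-1, 1}. Rw \<alpha> i * c) = c"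
  by (simp add: sum_pm_one Rw_def algebra_simps)

lemma Qalpha_eq:
  "Qalpha \<alpha> \<pi> P B (x, i) (y, 1) = Rw \<alpha> 1 * gibbs \<pi> B x y"
  "Qalpha \<alpha> \<pi> P B (x, i) (y, -1) = Rw \<alpha> (-1) * P x y"
  by (simp_all add: Qalpha_def Rw_def)

lemma KL_lifted_eq:
  "KL (lifted_space n) (pitilde \<alpha> \<pi>) (Qalpha \<alpha> \<pi> P B) (rowmat (pitilde \<alpha> \<pi>))
     = (1 - \<alpha>) * KL {1..n} \<pi> (gibbs \<pi> B) (rowmat \<pi>) + \<alpha> * KL {1..n} \<pi> P (rowmat \<pi>)"
proof -
  define g where "g x y = \<pi> x * gibbs \<pi> B x y * ln (gibbs \<pi> B x y / \<pi> y)" for x y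
  define p where "p x y = \<pi> x * P x y * ln (P x y / \<pi> y)" for x y
  have summand: "(\<Sum>j\<in>{-1, 1}. pitilde \<alpha> \<pi> (x, i) * Qalpha \<alpha> \<pi> P B (x, i) (y, j)
        * ln (Qalpha \<alpha> \<pi> P B (x, i) (y, j) / rowmat (pitilde \<alpha> \<pi>) (x, i) (y, j)))
      = Rw \<alpha> i * ((1 - \<alpha>) * g x y + \<alpha> * p x y)" for x i y
    unfolding sum_pm_one Qalpha_eq pitilde_def rowmat_def fst_conv snd_conv KL_summand_scale
      g_def p_def
    by (simp add: Rw_def algebra_simps)
  have "KL (lifted_space n) (pitilde \<alpha> \<pi>) (Qalpha \<alpha> \<pi> P B) (rowmat (pitilde \<alpha> \<pi>))
      = (\<Sum>x\<in>{1..n}. \<Sum>i\<in>{-1, 1}. \<Sum>y\<in>{1..n}. Rw \<alpha> i * ((1 - \<alpha>) * g x y + \<alpha> * p x y))"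
    by (simp only: KL_eq lifted_space_def sum.cartesian_product' summand)
  also have "\<dots> = (\<Sum>x\<in>{1..n}. \<Sum>y\<in>{1..n}. (1 - \<alpha>) * g x y + \<alpha> * p x y)"
    by (simp only: sum_distrib_left[symmetric] sum_Rw_mult)
  also have "\<dots> = (1 - \<alpha>) * KL {1..n} \<pi> (gibbs \<pi> B) (rowmat \<pi>) + \<alpha> * KL {1..n} \<pi> P (rowmat \<pi>)"
    by (simp add: KL_eq g_def p_def rowmat_def sum.distrib sum_distrib_left)
  finally show ?thesis .
qed

definition singleton_tail_partition :: "nat \<Rightarrow> nat \<Rightarrow> nat set set" where
  "singleton_tail_partition n k = (\<lambda>i. {i}) ` {1..k-1} \<union> {{k..n}}"

lemma tail_notin_singletons:
  fixes k n :: nat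
  assumes "k \<le> n"
  shows "{k..n} \<notin> (\<lambda>i. {i}) ` {1..k-1}"
proof
  assume "{k..n} \<in> (\<lambda>i. {i}) ` {1..k-1}"
  then obtain i where "1 \<le> i" "i \<le> k - 1" "{k..n} = {i}"
    by auto
  moreover have "k \<in> {k..n}"
    using assms by simp
  ultimately show False
    using assms by auto
qed

lemma is_partition_singleton_tail:
  assumes "2 \<le> k" "k \<le> n"
  shows "is_partition_k n k (singleton_tail_partition n k)"
proof -
  have "card (singleton_tail_partition n k) = k"
    using tail_notin_singletons[OF assms(2)] assms by (simp add: singleton_tail_partition_def card_image)
  moreover have "{i} \<noteq> {1..n}" for i
  proof
    assume "{i} = {1..n}"
    then have "card {i} = card {1..n}" by simp
    then show False using assms by simp
  qed
  moreover have "{k..n} \<noteq> {1..n}"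
  proof -
    have "1 \<in> {1..n} - {k..n}"
      using assms by auto
    then show ?thesis by blast
  qed
  ultimately show ?thesis
    using assms unfolding is_partition_k_def singleton_tail_partition_def by auto
qed

lemma entropy_singleton_tail:
  assumes "k \<le> n"
  shows "entropy (singleton_tail_partition n k) \<mu>
           = (\<Sum>i\<in>{1..k-1}. eta (\<mu> {i})) + eta (\<mu> {k..n})"
  using tail_notin_singletons[OF assms]
  by (simp add: singleton_tail_partition_def entropy_eq_sum_eta sum.reindex)

lemma entropy_singleton_tail_le:
  assumes B: "is_partition_k n k B" and k: "2 \<le> k" "k \<le> n"
    and pos: "\<forall>x\<in>{1..n}. \<pi> x > 0"
    and prob: "(\<Sum>x\<in>{1..n}. \<pi> x) = 1"
    and sorted: "\<forall>x\<in>{1..n}. \<forall>y\<in>{1..n}. x \<le> y \<longrightarrow> \<pi> x \<le> \<pi> y"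
  shows "entropy (singleton_tail_partition n k) (pmass \<pi>) \<le> entropy B (pmass \<pi>)"
proof -
  have "finite B" "B \<noteq> {}"
    using is_partition_kD(1,2)[OF B] k by auto
  then have "Max (pmass \<pi> ` B) \<in> pmass \<pi> ` B"
    by simp
  then obtain L where L: "L \<in> B" "pmass \<pi> L = Max (pmass \<pi> ` B)"
    by auto
  then have L_max: "pmass \<pi> C \<le> pmass \<pi> L" if "C \<in> B" for C
    using \<open>finite B\<close> that by simp
  have nonneg: "\<forall>x\<in>{1..n}. 0 \<le> \<pi> x"
    using pos by (simp add: less_imp_le)
  obtain \<tau> where \<tau>: "bij_betw \<tau> (B - {L}) {1..k-1}"
    and \<tau>_le: "\<And>C. C \<in> B - {L} \<Longrightarrow> \<pi> (\<tau> C) \<le> pmass \<pi> C"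
    using partition_ranked_blocks[OF B L(1) sorted nonneg] by blast
  have \<tau>_pos: "0 < \<pi> (\<tau> C)" if "C \<in> B - {L}" for C
    using bij_betw_apply[OF \<tau> that] pos k by auto
  have reindex: "(\<Sum>C\<in>B - {L}. f (\<tau> C)) = (\<Sum>i\<in>{1..k-1}. f i)" for f :: "nat \<Rightarrow> real"
    using sum.reindex_bij_betw[OF \<tau>] .
  have "{1..n} = {1..k-1} \<union> {k..n}"
    using k by auto
  then have "(\<Sum>C\<in>B - {L}. \<pi> (\<tau> C)) + pmass \<pi> {k..n} = 1"
    using prob by (simp add: reindex pmass_def sum.union_disjoint)
  moreover have "pmass \<pi> L + (\<Sum>C\<in>B - {L}. pmass \<pi> C) = 1"
    using prob sum_over_blocks[OF B, of \<pi>] \<open>finite B\<close> L(1)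
    by (simp add: pmass_def sum.remove)
  ultimately have tail: "pmass \<pi> {k..n} = pmass \<pi> L + (\<Sum>C\<in>B - {L}. pmass \<pi> C - \<pi> (\<tau> C))"
    by (simp add: sum_subtractf)
  have "entropy (singleton_tail_partition n k) (pmass \<pi>)
      = (\<Sum>C\<in>B - {L}. eta (\<pi> (\<tau> C))) + eta (pmass \<pi> {k..n})"
    using entropy_singleton_tail[OF k(2)] reindex[of "\<lambda>i. eta (\<pi> i)"] by (simp add: pmass_def)
  also have "\<dots> \<le> (\<Sum>C\<in>B - {L}. eta (pmass \<pi> C)) + eta (pmass \<pi> L)"
    unfolding tail using \<open>finite B\<close> \<tau>_pos \<tau>_le L_max pmass_pos[OF B L(1) pos]
    by (intro eta_sum_le_transfer_to_max) auto
  also have "\<dots> = entropy B (pmass \<pi>)"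
    using \<open>finite B\<close> L(1) by (simp add: entropy_eq_sum_eta sum.remove)
  finally show ?thesis .
qed

theorem proposition5p3:
  fixes n k :: nat and \<pi> :: "nat \<Rightarrow> real" and P :: "nat \<Rightarrow> nat \<Rightarrow> real" and \<alpha> :: real
  assumes pos: "\<forall>x\<in>{1..n}. \<pi> x > 0"
    and prob: "(\<Sum>x\<in>{1..n}. \<pi> x) = 1"
    and sorted: "\<forall>x\<in>{1..n}. \<forall>y\<in>{1..n}. x \<le> y \<longrightarrow> \<pi> x \<le> \<pi> y"
    and P_nonneg: "\<forall>x\<in>{1..n}. \<forall>y\<in>{1..n}. P x y \<ge> 0"
    and P_rows: "\<forall>x\<in>{1..n}. (\<Sum>y\<in>{1..n}. P x y) = 1"
    and stat: "\<forall>y\<in>{1..n}. (\<Sum>x\<in>{1..n}. \<pi> x * P x y) = \<pi> y"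
    and k: "2 \<le> k" "k \<le> n"
    and \<alpha>: "0 \<le> \<alpha>" "\<alpha> < 1"
  shows "argmin_part n k (\<lambda>B. KL (lifted_space n) (pitilde \<alpha> \<pi>) (Qalpha \<alpha> \<pi> P B)
              (rowmat (pitilde \<alpha> \<pi>)))
           = argmin_part n k (\<lambda>B. KL {1..n} \<pi> (gibbs \<pi> B) (rowmat \<pi>))
      \<and> argmin_part n k (\<lambda>B. KL {1..n} \<pi> (gibbs \<pi> B) (rowmat \<pi>))
           = argmin_part n k (\<lambda>B. entropy B (pmass \<pi>))
      \<and> (\<lambda>i. {i}) ` {1..k-1} \<union> {{k..n}} \<in> argmin_part n k (\<lambda>B. entropy B (pmass \<pi>))"
proof -
  have lifted: "argmin_part n k (\<lambda>B. KL (lifted_space n) (pitilde \<alpha> \<pi>) (Qalpha \<alpha> \<pi> P B)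
                  (rowmat (pitilde \<alpha> \<pi>)))
              = argmin_part n k (\<lambda>B. KL {1..n} \<pi> (gibbs \<pi> B) (rowmat \<pi>))"
    using \<alpha> by (intro argmin_part_affine[OF KL_lifted_eq]) auto
  have gibbs: "argmin_part n k (\<lambda>B. KL {1..n} \<pi> (gibbs \<pi> B) (rowmat \<pi>))
              = argmin_part n k (\<lambda>B. entropy B (pmass \<pi>))"
    using KL_gibbs_eq_entropy[OF _ pos] by (intro argmin_part_affine[where a = 1 and c = 0]) auto
  have "singleton_tail_partition n k \<in> argmin_part n k (\<lambda>B. entropy B (pmass \<pi>))"
    using is_partition_singleton_tail[OF k] entropy_singleton_tail_le[OF _ k pos prob sorted]
    unfolding argmin_part_def by blast
  with lifted gibbs show ?thesis
    unfolding singleton_tail_partition_def by blast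
qed

end
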